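(* Let $F$ be a once-punctured torus equipped with a point of the decorated super Teichmüller space $S\tilde T(F)$ with values in the Grassmann algebra $\mathbb{R}_{S[N]}$, with super semi-perimeter $h$. Fix an ideal arc $\mathbf a$ with $\lambda$-length $a$. Let $\{\mathbf b_i\}_{i\in\mathbb Z}$ be the sequence of ideal arcs disjoint from $\mathbf a$, indexed so that $\{\mathbf a,\mathbf b_i,\mathbf b_{i+1}\}$ is an ideal triangulation for every $i$, and let $\mathbf c_i$ be the arc obtained from $\mathbf a$ by flipping it in the triangulation $\{\mathbf a,\mathbf b_i,\mathbf b_{i+1}\}$. Let $b_i,c_i$ be their $\lambda$-lengths. Then, for each $k$, \[ \|s_{2k}(b_i)\|=O(|i|^kR^{|i|})\quad\text{and}\quad \|s_{2k}(c_i)\|=O(|i|^{2k}R^{2|i|})\qquad(|i|\to\infty), \] where $R=\epsilon(r)$ is the body of $r=\tfrac12\big(ah-W_a+\sqrt{(ah-W_a)^2-4}\big)$.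
   Context: $\mathbb{R}_{S[N]}$ is the real Grassmann algebra generated by anticommuting $\beta_{[1]},\dots,\beta_{[N]}$; each $x$ is $\sum_\lambda x_\lambda\beta_{[\lambda]}$, the body $\epsilon(x)$ is the coefficient of $1$, $\|x\|=\sum_\lambda|x_\lambda|$, and $s_{2k}(x)$ is the sum of terms of degree $|\lambda|=2k$ (with $s_0(x)=\epsilon(x)\cdot1$). $S\tilde T(F)$ is the decorated $\mathrm{OSp}(1|2)$ super Teichmüller space (Penner–Zeitlin): a point assigns to each ideal triangulation of $F$ even $\lambda$-lengths with positive body to its three arcs (depending only on the arc), odd $\mu$-invariants to its two triangles, and a spin structure orienting each arc. For an arc $e$, $W_e=\theta_1\theta_2$ with $\theta_1,\theta_2$ the $\mu$-invariants of the triangles adjacent to $e$ counter-clockwise and clockwise of $e$ relative to its spin orientation. Flipping $c$ in a triangulation $\{a,b,c\}$ produces $d$ with $cd=a^2+b^2+abW_c$. The super semi-perimeter is $h=\frac{a}{bc}+\frac{b}{ac}+\frac{c}{ab}+\frac{W_a}{a}+\frac{W_b}{b}+\frac{W_c}{c}$ for any triangulation $\{a,b,c\}$. *)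

theory Defs
  imports Complex_Main "HOL-Library.Landau_Symbols"
begin

text \<open>An element x = sum_lambda x_lambda beta_[lambda] is represented by its coefficient
  function  nat set => real  (lambda ranges over subsets of {1..N}; beta_[lambda] is the
  product of the generators with indices in lambda taken in increasing order).\<close>

type_synonym grass = "nat set \<Rightarrow> real"

definition RS :: "nat \<Rightarrow> grass set" where
  "RS N = {x. \<forall>l. x l \<noteq> 0 \<longrightarrow> l \<subseteq> {1..N}}"

text \<open>Sign of beta_[mu] * beta_[nu] = gsign mu nu * beta_[mu Un nu] (0 if they overlap).\<close>
definition gsign :: "nat set \<Rightarrow> nat set \<Rightarrow> real" where
  "gsign m n = (if m \<inter> n = {} then (-1) ^ card {(i, j). i \<in> m \<and> j \<in> n \<and> j < i} else 0)"

definition gmul :: "grass \<Rightarrow> grass \<Rightarrow> grass" where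
  "gmul x y = (\<lambda>l. \<Sum>m\<in>Pow l. gsign m (l - m) * x m * y (l - m))"

definition gadd :: "grass \<Rightarrow> grass \<Rightarrow> grass" where
  "gadd x y = (\<lambda>l. x l + y l)"

definition gscale :: "real \<Rightarrow> grass \<Rightarrow> grass" where
  "gscale c x = (\<lambda>l. c * x l)"

definition gsub :: "grass \<Rightarrow> grass \<Rightarrow> grass" where
  "gsub x y = (\<lambda>l. x l - y l)"

definition gconst :: "real \<Rightarrow> grass" where
  "gconst c = (\<lambda>l. if l = {} then c else 0)"

definition body :: "grass \<Rightarrow> real" where
  "body x = x {}"

definition soul :: "grass \<Rightarrow> grass" where
  "soul x = gsub x (gconst (body x))"

primrec gpow :: "grass \<Rightarrow> nat \<Rightarrow> grass" where
  "gpow x 0 = gconst 1"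
| "gpow x (Suc n) = gmul x (gpow x n)"

definition gnorm :: "nat \<Rightarrow> grass \<Rightarrow> real" where
  "gnorm N x = (\<Sum>l\<in>Pow {1..N}. \<bar>x l\<bar>)"

definition s2k :: "nat \<Rightarrow> grass \<Rightarrow> grass" where
  "s2k k x = (\<lambda>l. if finite l \<and> card l = 2 * k then x l else 0)"

definition geven :: "nat \<Rightarrow> grass \<Rightarrow> bool" where
  "geven N x \<longleftrightarrow> x \<in> RS N \<and> (\<forall>l. x l \<noteq> 0 \<longrightarrow> even (card l))"

definition godd :: "nat \<Rightarrow> grass \<Rightarrow> bool" where
  "godd N x \<longleftrightarrow> x \<in> RS N \<and> (\<forall>l. x l \<noteq> 0 \<longrightarrow> odd (card l))"

text \<open>Inverse of an element with nonzero body (the soul is nilpotent: its (N+1)-st power vanishes).\<close>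
definition ginv :: "nat \<Rightarrow> grass \<Rightarrow> grass" where
  "ginv N x = (\<lambda>l. (1 / body x) * (\<Sum>j\<le>N. gpow (gscale (- 1 / body x) (soul x)) j l))"

definition gdiv :: "nat \<Rightarrow> grass \<Rightarrow> grass \<Rightarrow> grass" where
  "gdiv N x y = gmul x (ginv N y)"

definition gsqrt :: "nat \<Rightarrow> grass \<Rightarrow> grass" where
  "gsqrt N x = (\<lambda>l. sqrt (body x) *
      (\<Sum>j\<le>N. ((1/2 :: real) gchoose j) * gpow (gscale (1 / body x) (soul x)) j l))"

text \<open>In a triangulation the two triangles carry odd mu-invariants mu True, mu False.
  For an arc e, the boolean ccw says whether the triangle "True" is the one counter-clockwise of e
  relative to its spin orientation; then W_e = theta_ccw * theta_cw.\<close>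
definition Wof :: "(bool \<Rightarrow> grass) \<Rightarrow> bool \<Rightarrow> grass" where
  "Wof mu ccw = (if ccw then gmul (mu True) (mu False) else gmul (mu False) (mu True))"

text \<open>Right-hand side of the flip relation: flipping c in {a,b,c} gives d with
  c d = a^2 + b^2 + a b W_c.\<close>
definition flip_rhs :: "grass \<Rightarrow> grass \<Rightarrow> grass \<Rightarrow> grass" where
  "flip_rhs a b Wc = gadd (gadd (gmul a a) (gmul b b)) (gmul (gmul a b) Wc)"

definition semiper :: "nat \<Rightarrow> grass \<Rightarrow> grass \<Rightarrow> grass \<Rightarrow> grass \<Rightarrow> grass \<Rightarrow> grass \<Rightarrow> grass" where
  "semiper N a b c Wa Wb Wc =
     gadd (gadd (gadd (gdiv N a (gmul b c)) (gdiv N b (gmul a c))) (gdiv N c (gmul a b)))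
          (gadd (gadd (gdiv N Wa a) (gdiv N Wb b)) (gdiv N Wc c))"

end

(*
  In the commutative ring of even elements the flip relations, together with the definition of the
  super semi-perimeter h, give the linear recurrence
    b (i + 1) + b (i - 1) = (a h - W_a) b i - a W_(b i),
  whose forcing term a W_(b i) is nilpotent and 2-periodic in i.  On bodies this is the classical
  recurrence with characteristic roots R and 1/R, where R > 1 because the body of a h - W_a exceeds 2
  (AM-GM applied to the body of the flip relation).  The coefficient of beta_[l] satisfies the same
  recurrence, forced by coefficients of lower degree; by induction on |l| = 2k it grows like
  |i|^k R^|i|, each forcing step costing one factor of |i|.  Finally
  c i = a^-1 (b i ^ 2 + b (i + 1) ^ 2 + b i b (i + 1) W_a) has coefficients of degree 2k of size
  |i|^k R^(2|i|), which is even better than claimed.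
*)

theory Submission
  imports Defs
begin

section \<open>Multiplication in the Grassmann algebra\<close>

definition inversions :: "nat set \<Rightarrow> nat set \<Rightarrow> (nat \<times> nat) set" where
  "inversions m n = {(i, j). i \<in> m \<and> j \<in> n \<and> j < i}"

lemma gsign_eq_inversions: "m \<inter> n = {} \<Longrightarrow> gsign m n = (-1) ^ card (inversions m n)"
  by (simp add: gsign_def inversions_def)

lemma finite_inversions: "finite m \<Longrightarrow> finite n \<Longrightarrow> finite (inversions m n)"
  unfolding inversions_def by (rule finite_subset[of _ "m \<times> n"]) auto

lemma card_inversions_Un_left:
  assumes "finite m" "finite n" "finite p" "m \<inter> n = {}"
  shows "card (inversions (m \<union> n) p) = card (inversions m p) + card (inversions n p)"
proof -
  have "inversions (m \<union> n) p = inversions m p \<union> inversions n p"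
    and "inversions m p \<inter> inversions n p = {}"
    using assms(4) by (auto simp: inversions_def)
  then show ?thesis by (simp add: card_Un_disjoint finite_inversions assms)
qed

lemma card_inversions_Un_right:
  assumes "finite m" "finite n" "finite p" "n \<inter> p = {}"
  shows "card (inversions m (n \<union> p)) = card (inversions m n) + card (inversions m p)"
proof -
  have "inversions m (n \<union> p) = inversions m n \<union> inversions m p"
    and "inversions m n \<inter> inversions m p = {}"
    using assms(4) by (auto simp: inversions_def)
  then show ?thesis by (simp add: card_Un_disjoint finite_inversions assms)
qed

lemma card_inversions_swap:
  assumes "finite m" "finite n" "m \<inter> n = {}"
  shows "card (inversions m n) + card (inversions n m) = card m * card n"
proof -
  let ?B = "{(i, j). i \<in> m \<and> j \<in> n \<and> i < j}"
  have "inversions n m = prod.swap ` ?B"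
    by (auto simp: inversions_def image_iff)
  then have "card (inversions n m) = card ?B"
    by (simp add: card_image)
  moreover have "m \<times> n = inversions m n \<union> ?B"
    using assms(3) by (auto simp: inversions_def linorder_neq_iff)
  moreover have "inversions m n \<inter> ?B = {}"
    by (auto simp: inversions_def)
  moreover have "finite ?B"
    by (rule finite_subset[of _ "m \<times> n"]) (auto simp: assms)
  ultimately have "card (m \<times> n) = card (inversions m n) + card (inversions n m)"
    by (simp add: card_Un_disjoint finite_inversions assms)
  then show ?thesis by (simp add: card_cartesian_product)
qed

lemma gsign_cocycle:
  assumes "finite p" "finite q" "finite r" "p \<inter> q = {}" "p \<inter> r = {}" "q \<inter> r = {}"
  shows "gsign p q * gsign (p \<union> q) r = gsign p (q \<union> r) * gsign q r"
  using assms by (simp add: gsign_eq_inversions card_inversions_Un_left card_inversions_Un_right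
      Int_Un_distrib Int_Un_distrib2 power_add)

lemma gsign_swap_even:
  assumes "finite m" "finite n" "even (card m)"
  shows "gsign n m = gsign m n"
proof (cases "m \<inter> n = {}")
  case True
  then have "even (card (inversions m n) + card (inversions n m))"
    using card_inversions_swap assms by simp
  then have "(-1::real) ^ card (inversions n m) = (-1) ^ card (inversions m n)"
    by (metis even_add neg_one_even_power neg_one_odd_power)
  then show ?thesis using True by (simp add: gsign_eq_inversions Int_commute)
qed (simp add: gsign_def Int_commute)

lemma gsign_empty [simp]: "gsign {} l = 1" "gsign l {} = 1"
  by (simp_all add: gsign_def)

lemma gmul_assoc: "gmul (gmul x y) z = gmul x (gmul y z)"
proof
  fix l
  show "gmul (gmul x y) z l = gmul x (gmul y z) l"
  proof (cases "finite l")
    case fin: True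
    let ?F = "\<lambda>p q. gsign p (l - p) * gsign q (l - p - q) * x p * y q * z (l - p - q)"
    have "gmul (gmul x y) z l
        = (\<Sum>m\<in>Pow l. \<Sum>p\<in>Pow m. gsign p (m - p) * gsign m (l - m) * x p * y (m - p) * z (l - m))"
      unfolding gmul_def by (simp add: sum_distrib_left sum_distrib_right mult_ac)
    also have "\<dots> = (\<Sum>(m, p)\<in>Sigma (Pow l) Pow. gsign p (m - p) * gsign m (l - m) * x p * y (m - p) * z (l - m))"
      by (rule sum.Sigma) (auto intro: finite_subset[OF _ fin])
    also have "\<dots> = (\<Sum>(p, q)\<in>Sigma (Pow l) (\<lambda>p. Pow (l - p)). ?F p q)"
    proof (rule sum.reindex_bij_witness[where i = "\<lambda>(p, q). (p \<union> q, p)" and j = "\<lambda>(m, p). (p, m - p)"])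
      fix mp assume "mp \<in> Sigma (Pow l) Pow"
      then obtain m p where mp: "mp = (m, p)" "m \<subseteq> l" "p \<subseteq> m" by auto
      then have "finite p" "finite (m - p)" "finite (l - m)"
        using fin by (auto intro: finite_subset)
      then have "gsign p (m - p) * gsign (p \<union> (m - p)) (l - m)
          = gsign p ((m - p) \<union> (l - m)) * gsign (m - p) (l - m)"
        using mp by (intro gsign_cocycle) auto
      moreover have "(m - p) \<union> (l - m) = l - p" "p \<union> (m - p) = m" "l - p - (m - p) = l - m"
        using mp by auto
      ultimately show "(\<lambda>(p, q). ?F p q) ((\<lambda>(m, p). (p, m - p)) mp)
          = (\<lambda>(m, p). gsign p (m - p) * gsign m (l - m) * x p * y (m - p) * z (l - m)) mp"
        using mp by simp
    qed auto
    also have "\<dots> = (\<Sum>p\<in>Pow l. \<Sum>q\<in>Pow (l - p). ?F p q)"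
      by (rule sum.Sigma[symmetric]) (auto intro: finite_subset[OF _ fin])
    also have "\<dots> = gmul x (gmul y z) l"
      unfolding gmul_def by (simp add: sum_distrib_left sum_distrib_right mult_ac)
    finally show ?thesis .
  qed (simp add: gmul_def)
qed

lemma gmul_gadd_left: "gmul (gadd x y) z = gadd (gmul x z) (gmul y z)"
  by (rule ext) (simp add: gmul_def gadd_def algebra_simps sum.distrib)

lemma gmul_gconst_left:
  assumes "\<And>l. x l \<noteq> 0 \<Longrightarrow> finite l"
  shows "gmul (gconst c) x = gscale c x"
proof
  fix l
  show "gmul (gconst c) x l = gscale c x l"
  proof (cases "finite l")
    case True
    then have "gmul (gconst c) x l = (\<Sum>m\<in>Pow l. if m = {} then c * x l else 0)"
      unfolding gmul_def gconst_def by (intro sum.cong) auto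
    with True show ?thesis by (simp add: gscale_def)
  qed (use assms in \<open>auto simp: gmul_def gscale_def\<close>)
qed

lemma gmul_nonzero_split:
  assumes "gmul x y l \<noteq> 0"
  obtains m where "finite l" "m \<subseteq> l" "x m \<noteq> 0" "y (l - m) \<noteq> 0"
proof -
  have "finite l"
    using assms by (auto simp: gmul_def intro: ccontr)
  moreover have "\<exists>m\<in>Pow l. gsign m (l - m) * x m * y (l - m) \<noteq> 0"
    using assms unfolding gmul_def by (meson sum.neutral)
  ultimately show thesis using that by auto
qed

lemma body_gmul: "body (gmul x y) = body x * body y"
  by (simp add: gmul_def body_def)

lemma card_split_subset: "finite l \<Longrightarrow> m \<subseteq> l \<Longrightarrow> card l = card m + card (l - m)"
  using card_Int_Diff[of l m] by (simp add: Int_absorb1)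

lemma RS_finite: "x \<in> RS N \<Longrightarrow> x l \<noteq> 0 \<Longrightarrow> finite l"
  unfolding RS_def by (auto intro: finite_subset)

lemma RS_gmul: "x \<in> RS N \<Longrightarrow> y \<in> RS N \<Longrightarrow> gmul x y \<in> RS N"
  unfolding RS_def by (blast elim: gmul_nonzero_split)

lemma gmul_parity:
  assumes "gmul x y l \<noteq> 0"
    and "\<And>m. x m \<noteq> 0 \<Longrightarrow> P (card m)" "\<And>m. y m \<noteq> 0 \<Longrightarrow> Q (card m)"
  obtains p q where "P p" "Q q" "card l = p + q"
proof -
  obtain m where "finite l" "m \<subseteq> l" "x m \<noteq> 0" "y (l - m) \<noteq> 0"
    using assms(1) by (rule gmul_nonzero_split)
  then show thesis using that assms(2,3) card_split_subset by metis
qed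

lemma geven_gmul: "geven N x \<Longrightarrow> geven N y \<Longrightarrow> geven N (gmul x y)"
  unfolding geven_def
proof (intro conjI allI impI)
  fix l assume "x \<in> RS N \<and> (\<forall>l. x l \<noteq> 0 \<longrightarrow> even (card l))"
    and "y \<in> RS N \<and> (\<forall>l. y l \<noteq> 0 \<longrightarrow> even (card l))" and "gmul x y l \<noteq> 0"
  then obtain p q where "even p" "even q" "card l = p + q"
    using gmul_parity[of x y l "even" "even"] by blast
  then show "even (card l)" by simp
qed (simp_all add: RS_gmul)

lemma godd_gmul: "godd N x \<Longrightarrow> godd N y \<Longrightarrow> geven N (gmul x y)"
  unfolding geven_def godd_def
proof (intro conjI allI impI)
  fix l assume "x \<in> RS N \<and> (\<forall>l. x l \<noteq> 0 \<longrightarrow> odd (card l))"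
    and "y \<in> RS N \<and> (\<forall>l. y l \<noteq> 0 \<longrightarrow> odd (card l))" and "gmul x y l \<noteq> 0"
  then obtain p q where "odd p" "odd q" "card l = p + q"
    using gmul_parity[of x y l "odd" "odd"] by blast
  then show "even (card l)" by simp
qed (simp_all add: RS_gmul)

lemma geven_gadd:
  assumes "geven N x" "geven N y"
  shows "geven N (gadd x y)"
proof -
  have "x l \<noteq> 0 \<or> y l \<noteq> 0" if "gadd x y l \<noteq> 0" for l
    using that by (auto simp: gadd_def)
  with assms show ?thesis unfolding geven_def RS_def by blast
qed

lemma geven_gsub:
  assumes "geven N x" "geven N y"
  shows "geven N (gsub x y)"
proof -
  have "x l \<noteq> 0 \<or> y l \<noteq> 0" if "gsub x y l \<noteq> 0" for l
    using that by (auto simp: gsub_def)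
  with assms show ?thesis unfolding geven_def RS_def by blast
qed

lemma geven_gscale: "geven N x \<Longrightarrow> geven N (gscale c x)"
  by (simp add: geven_def RS_def gscale_def)

lemma geven_gconst: "geven N (gconst c)"
  by (simp add: geven_def RS_def gconst_def)

lemma geven_mono: "geven N x \<Longrightarrow> N \<le> M \<Longrightarrow> geven M x"
  by (fastforce simp: geven_def RS_def)

lemma gmul_comm_even:
  assumes x: "\<And>l. x l \<noteq> 0 \<Longrightarrow> finite l \<and> even (card l)"
  shows "gmul x y = gmul y x"
proof
  fix l
  show "gmul x y l = gmul y x l"
  proof (cases "finite l")
    case fin: True
    have "gmul y x l = (\<Sum>m\<in>Pow l. gsign (l - m) m * y (l - m) * x m)"
      unfolding gmul_def
      by (rule sum.reindex_bij_witness[where i = "\<lambda>m. l - m" and j = "\<lambda>m. l - m"])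
         (auto simp: Diff_Diff_Int Int_absorb1)
    also have "\<dots> = (\<Sum>m\<in>Pow l. gsign m (l - m) * x m * y (l - m))"
    proof (rule sum.cong)
      fix m assume "m \<in> Pow l"
      then show "gsign (l - m) m * y (l - m) * x m = gsign m (l - m) * x m * y (l - m)"
        using x[of m] fin gsign_swap_even[of m "l - m"] by (cases "x m = 0") auto
    qed simp
    finally show ?thesis by (simp add: gmul_def)
  qed (simp add: gmul_def)
qed

lemma gpow_empty: "gpow x j {} = body x ^ j"
  by (induction j) (simp_all add: gconst_def body_gmul[unfolded body_def] body_def)

lemma RS_gpow: "x \<in> RS N \<Longrightarrow> gpow x j \<in> RS N"
  by (induction j) (simp_all add: RS_gmul, simp add: RS_def gconst_def)

lemma gpow_nonzero_card:
  assumes "x \<in> RS N" "body x = 0" "gpow x j l \<noteq> 0"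
  shows "j \<le> card l"
  using assms(3)
proof (induction j arbitrary: l)
  case (Suc j)
  then obtain m where m: "finite l" "m \<subseteq> l" "x m \<noteq> 0" "gpow x j (l - m) \<noteq> 0"
    by (auto elim: gmul_nonzero_split)
  have "m \<noteq> {}" using m(3) assms(2) by (auto simp: body_def)
  then have "card m > 0" using m(1,2) by (meson card_gt_0_iff finite_subset)
  with Suc.IH[OF m(4)] card_split_subset[OF m(1,2)] show ?case by simp
qed simp

lemma gpow_nilpotent:
  assumes "x \<in> RS N" "body x = 0"
  shows "gpow x (Suc N) = gconst 0"
proof
  fix l
  show "gpow x (Suc N) l = gconst 0 l"
  proof (rule ccontr)
    assume "gpow x (Suc N) l \<noteq> gconst 0 l"
    then have nz: "gpow x (Suc N) l \<noteq> 0" by (simp add: gconst_def)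
    then have "l \<subseteq> {1..N}" using RS_gpow[OF assms(1)] unfolding RS_def by blast
    then have "card l \<le> N" using card_mono[of "{1..N}" l] by simp
    with gpow_nonzero_card[OF assms nz] show False by simp
  qed
qed

section \<open>The commutative ring of even elements\<close>

definition grass_even :: "grass set" where
  "grass_even = {x. \<exists>N. geven N x}"

lemma grass_evenI: "geven N x \<Longrightarrow> x \<in> grass_even"
  unfolding grass_even_def by blast

lemma grass_even_support: "x \<in> grass_even \<Longrightarrow> x l \<noteq> 0 \<Longrightarrow> finite l \<and> even (card l)"
  unfolding grass_even_def geven_def using RS_finite by blast

lemma grass_even_pairE:
  assumes "x \<in> grass_even" "y \<in> grass_even"
  obtains N where "geven N x" "geven N y"
proof -
  obtain N M where "geven N x" "geven M y"
    using assms by (auto simp: grass_even_def)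
  then show thesis
    using that[of "max N M"] geven_mono by (meson max.cobounded1 max.cobounded2)
qed

lemma grass_even_gmul [simp]: "x \<in> grass_even \<Longrightarrow> y \<in> grass_even \<Longrightarrow> gmul x y \<in> grass_even"
  by (erule (1) grass_even_pairE) (rule grass_evenI, erule (1) geven_gmul)

lemma grass_even_gadd [simp]: "x \<in> grass_even \<Longrightarrow> y \<in> grass_even \<Longrightarrow> gadd x y \<in> grass_even"
  by (erule (1) grass_even_pairE) (rule grass_evenI, erule (1) geven_gadd)

lemma grass_even_gsub [simp]: "x \<in> grass_even \<Longrightarrow> y \<in> grass_even \<Longrightarrow> gsub x y \<in> grass_even"
  by (erule (1) grass_even_pairE) (rule grass_evenI, erule (1) geven_gsub)

lemma grass_even_gscale [simp]: "x \<in> grass_even \<Longrightarrow> gscale c x \<in> grass_even"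
  unfolding grass_even_def using geven_gscale by blast

lemma grass_even_gconst [simp]: "gconst c \<in> grass_even"
  using geven_gconst by (rule grass_evenI)

text \<open>All even elements, for every number \<open>N\<close> of generators at once, so that the type does not
  depend on \<open>N\<close>.\<close>

typedef evgrass = grass_even
  using grass_even_gconst by blast

setup_lifting type_definition_evgrass

instantiation evgrass :: comm_ring_1
begin

lift_definition zero_evgrass :: evgrass is "gconst 0" by simp
lift_definition one_evgrass :: evgrass is "gconst 1" by simp
lift_definition plus_evgrass :: "evgrass \<Rightarrow> evgrass \<Rightarrow> evgrass" is gadd by simp
lift_definition minus_evgrass :: "evgrass \<Rightarrow> evgrass \<Rightarrow> evgrass" is gsub by simp
lift_definition uminus_evgrass :: "evgrass \<Rightarrow> evgrass" is "gscale (-1)" by simp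
lift_definition times_evgrass :: "evgrass \<Rightarrow> evgrass \<Rightarrow> evgrass" is gmul by simp

instance
proof
  fix x y z :: evgrass
  show "x * y * z = x * (y * z)"
    by transfer (rule gmul_assoc)
  show "x * y = y * x"
    by transfer (metis gmul_comm_even grass_even_support)
  show "1 * x = x"
    by transfer (metis gmul_gconst_left grass_even_support gscale_def mult_1 ext)
  show "(x + y) * z = x * z + y * z"
    by transfer (rule gmul_gadd_left)
  show "(0::evgrass) \<noteq> 1"
    by transfer (simp add: gconst_def fun_eq_iff)
qed (transfer; simp add: gadd_def gsub_def gscale_def gconst_def fun_eq_iff)+

end

definition const_evgrass :: "real \<Rightarrow> evgrass" where
  "const_evgrass c = Abs_evgrass (gconst c)"

lemma Abs_evgrass_gmul:
  "x \<in> grass_even \<Longrightarrow> y \<in> grass_even \<Longrightarrow> Abs_evgrass (gmul x y) = Abs_evgrass x * Abs_evgrass y"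
  by (simp add: times_evgrass.abs_eq eq_onp_def)

lemma Abs_evgrass_gadd:
  "x \<in> grass_even \<Longrightarrow> y \<in> grass_even \<Longrightarrow> Abs_evgrass (gadd x y) = Abs_evgrass x + Abs_evgrass y"
  by (simp add: plus_evgrass.abs_eq eq_onp_def)

lemma Abs_evgrass_gsub:
  "x \<in> grass_even \<Longrightarrow> y \<in> grass_even \<Longrightarrow> Abs_evgrass (gsub x y) = Abs_evgrass x - Abs_evgrass y"
  by (simp add: minus_evgrass.abs_eq eq_onp_def)

lemma Rep_evgrass_power: "Rep_evgrass (X ^ n) = gpow (Rep_evgrass X) n"
  by (induction n) (simp_all add: one_evgrass.rep_eq times_evgrass.rep_eq)

lemma Rep_evgrass_sum: "finite A \<Longrightarrow> Rep_evgrass (sum F A) l = (\<Sum>a\<in>A. Rep_evgrass (F a) l)"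
  by (induction A rule: finite_induct) (simp_all add: zero_evgrass.rep_eq plus_evgrass.rep_eq gadd_def gconst_def)

lemma Rep_evgrass_const_times: "Rep_evgrass (const_evgrass c * X) = gscale c (Rep_evgrass X)"
  using Rep_evgrass[of X] grass_even_support
  by (simp add: const_evgrass_def times_evgrass.rep_eq Abs_evgrass_inverse gmul_gconst_left)

lemma Rep_const_evgrass: "Rep_evgrass (const_evgrass c) = gconst c"
  by (simp add: const_evgrass_def Abs_evgrass_inverse)

lemma const_evgrass_mult: "const_evgrass a * const_evgrass b = const_evgrass (a * b)"
  by (simp add: Rep_evgrass_inject[symmetric] Rep_evgrass_const_times Rep_const_evgrass)
     (simp add: gscale_def gconst_def fun_eq_iff)

lemma const_evgrass_1: "const_evgrass 1 = 1"
  by (simp add: const_evgrass_def one_evgrass_def)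

lemma const_evgrass_uminus: "const_evgrass (- c) = - const_evgrass c"
  by (simp add: Rep_evgrass_inject[symmetric] Rep_const_evgrass uminus_evgrass.rep_eq)
     (simp add: gscale_def gconst_def fun_eq_iff)

lemma ginv_right_inverse:
  assumes y: "geven N y" and y0: "body y \<noteq> 0"
  shows "ginv N y \<in> grass_even" and "gmul y (ginv N y) = gconst 1"
proof -
  define Y where "Y = Abs_evgrass y"
  define T where "T = const_evgrass (-1 / body y) * (Y - const_evgrass (body y))"
  define I where "I = const_evgrass (1 / body y) * (\<Sum>j\<le>N. T ^ j)"
  have Rep_Y: "Rep_evgrass Y = y"
    using y by (simp add: Y_def Abs_evgrass_inverse grass_evenI)
  have Rep_T: "Rep_evgrass T = gscale (-1 / body y) (soul y)"
    by (simp add: T_def Rep_evgrass_const_times minus_evgrass.rep_eq Rep_Y soul_def Rep_const_evgrass)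
  have Rep_I: "Rep_evgrass I = ginv N y"
    by (simp add: I_def Rep_evgrass_const_times gscale_def Rep_evgrass_sum Rep_evgrass_power
        Rep_T ginv_def fun_eq_iff)
  have "Rep_evgrass T \<in> RS N" "body (Rep_evgrass T) = 0"
    using y unfolding Rep_T geven_def RS_def soul_def
    by (auto simp: gscale_def gsub_def gconst_def body_def)
  then have "T ^ Suc N = 0"
    unfolding Rep_evgrass_inject[symmetric] Rep_evgrass_power zero_evgrass.rep_eq
    by (rule gpow_nilpotent)
  have "const_evgrass (body y) * const_evgrass (-1 / body y) = - 1"
    using y0 by (simp add: const_evgrass_mult const_evgrass_uminus const_evgrass_1)
  then have "Y = const_evgrass (body y) * (1 - T)"
    by (simp add: T_def algebra_simps flip: mult.assoc)
  then have "Y * I = (const_evgrass (body y) * const_evgrass (1 / body y)) * ((1 - T) * (\<Sum>j\<le>N. T ^ j))"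
    by (simp add: I_def mult_ac)
  also have "\<dots> = 1"
    using y0 \<open>T ^ Suc N = 0\<close> by (simp add: const_evgrass_mult const_evgrass_1 sum_gp_basic)
  finally have "Y * I = 1" .
  then show "gmul y (ginv N y) = gconst 1"
    by (metis Rep_I Rep_Y one_evgrass.rep_eq times_evgrass.rep_eq)
  show "ginv N y \<in> grass_even"
    using Rep_I Rep_evgrass by metis
qed

lemma ginv_left_inverse:
  assumes "geven N y" "body y \<noteq> 0"
  shows "gmul (ginv N y) y = gconst 1"
  using ginv_right_inverse[OF assms] assms(1) grass_evenI grass_even_support gmul_comm_even by metis

lemma Abs_evgrass_ginv:
  assumes "geven N y" "body y \<noteq> 0"
  shows "Abs_evgrass y * Abs_evgrass (ginv N y) = 1"
  using ginv_right_inverse[OF assms] assms(1)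
  by (simp add: Abs_evgrass_gmul[symmetric] grass_evenI one_evgrass_def)

section \<open>Second order linear recurrences\<close>

lemma first_order_recurrence_bound:
  fixes z f :: "nat \<Rightarrow> real"
  assumes R: "R > 0" and rec: "\<And>n. z (Suc n) = R * z n + f (Suc n)"
  shows "\<bar>z n\<bar> \<le> R ^ n * (\<bar>z 0\<bar> + (\<Sum>j = 1..n. \<bar>f j\<bar> / R ^ j))"
proof (induction n)
  case (Suc n)
  have "\<bar>z (Suc n)\<bar> \<le> R * \<bar>z n\<bar> + \<bar>f (Suc n)\<bar>"
    using rec[of n] R abs_triangle_ineq[of "R * z n"] by (simp add: abs_mult)
  also have "\<dots> \<le> R * (R ^ n * (\<bar>z 0\<bar> + (\<Sum>j = 1..n. \<bar>f j\<bar> / R ^ j))) + \<bar>f (Suc n)\<bar>"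
    using Suc.IH R by simp
  also have "\<dots> = R ^ Suc n * (\<bar>z 0\<bar> + (\<Sum>j = 1..Suc n. \<bar>f j\<bar> / R ^ j))"
    using R by (simp add: field_simps)
  finally show ?case .
qed simp

lemma contracted_recurrence_bound:
  fixes y z v :: "nat \<Rightarrow> real"
  assumes \<rho>: "0 < \<rho>" "\<rho> < R" and rec: "\<And>n. y (Suc n) = \<rho> * y n + z n"
    and z: "\<And>n. \<bar>z n\<bar> \<le> E * v n * R ^ n"
    and v: "\<And>n. 1 \<le> v n" "\<And>n. v n \<le> v (Suc n)"
  shows "\<exists>D. \<forall>n. \<bar>y n\<bar> \<le> D * v n * R ^ n"
proof (intro exI allI)
  define D where "D = max \<bar>y 0\<bar> (E / (R - \<rho>))"
  have "E / (R - \<rho>) \<le> D"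
    by (simp add: D_def)
  then have DE: "\<rho> * D + E \<le> R * D"
    using \<rho> by (simp add: pos_divide_le_eq algebra_simps)
  have D0: "D \<ge> 0"
    by (simp add: D_def)
  fix n
  show "\<bar>y n\<bar> \<le> D * v n * R ^ n"
  proof (induction n)
    case 0
    then show ?case using v(1)[of 0] D0 mult_left_mono[of 1 "v 0" D] by (simp add: D_def)
  next
    case (Suc n)
    have vR: "0 \<le> v n * R ^ n" using v(1)[of n] \<rho> by simp
    have "\<bar>y (Suc n)\<bar> \<le> \<rho> * \<bar>y n\<bar> + \<bar>z n\<bar>"
      using rec[of n] \<rho> abs_triangle_ineq[of "\<rho> * y n"] by (simp add: abs_mult)
    also have "\<dots> \<le> \<rho> * (D * v n * R ^ n) + E * v n * R ^ n"
      using Suc.IH z[of n] \<rho> by (intro add_mono mult_left_mono) auto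
    also have "\<dots> = (\<rho> * D + E) * (v n * R ^ n)"
      by (simp add: algebra_simps)
    also have "\<dots> \<le> R * D * (v (Suc n) * R ^ n)"
      using DE vR v(2)[of n] \<rho> D0 by (intro mult_mono mult_right_mono) auto
    finally show ?case by (simp add: mult_ac)
  qed
qed

lemma second_order_recurrence_bound:
  fixes y f v :: "nat \<Rightarrow> real"
  assumes R: "R > 1" "R * R - x0 * R + 1 = 0"
    and rec: "\<And>n. y (n + 2) - x0 * y (n + 1) + y n = f (n + 1)"
    and v: "\<And>n. 1 \<le> v n" "\<And>n. v n \<le> v (Suc n)"
    and f: "\<And>n. (\<Sum>j = 1..n. \<bar>f j\<bar> / R ^ j) \<le> K * v n"
  shows "\<exists>D. \<forall>n. \<bar>y n\<bar> \<le> D * v n * R ^ n"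
proof -
  have x0: "x0 = R + 1 / R"
    using R by (simp add: field_simps)
  \<comment> \<open>factor the characteristic polynomial as \<open>(X - R) (X - 1 / R)\<close>\<close>
  define z where "z n = y (n + 1) - y n / R" for n
  have "z (Suc n) = R * z n + f (Suc n)" for n
    using rec[of n] R by (simp add: z_def x0 field_simps numeral_2_eq_2)
  then have z_bound: "\<bar>z n\<bar> \<le> R ^ n * (\<bar>z 0\<bar> + (\<Sum>j = 1..n. \<bar>f j\<bar> / R ^ j))" for n
    using R by (intro first_order_recurrence_bound) auto
  have "\<bar>z n\<bar> \<le> (\<bar>z 0\<bar> + K) * v n * R ^ n" for n
  proof -
    have "\<bar>z 0\<bar> + (\<Sum>j = 1..n. \<bar>f j\<bar> / R ^ j) \<le> (\<bar>z 0\<bar> + K) * v n"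
      using f[of n] v(1)[of n] mult_left_mono[of 1 "v n" "\<bar>z 0\<bar>"] by (simp add: algebra_simps)
    then have "R ^ n * (\<bar>z 0\<bar> + (\<Sum>j = 1..n. \<bar>f j\<bar> / R ^ j)) \<le> R ^ n * ((\<bar>z 0\<bar> + K) * v n)"
      using R by (intro mult_left_mono) auto
    with z_bound[of n] show ?thesis
      by (simp add: mult_ac)
  qed
  moreover have "y (Suc n) = 1 / R * y n + z n" for n
    by (simp add: z_def)
  moreover have "1 / R < R"
    using R by (simp add: field_simps less_1_mult)
  ultimately show ?thesis
    using R v by (intro contracted_recurrence_bound[of "1 / R" R]) auto
qed

lemma second_order_recurrence_bound_int:
  fixes y f :: "int \<Rightarrow> real" and v :: "nat \<Rightarrow> real"
  assumes R: "R > 1" "R * R - x0 * R + 1 = 0"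
    and rec: "\<And>i. y (i + 1) - x0 * y i + y (i - 1) = f i"
    and v: "\<And>n. 1 \<le> v n" "\<And>n. v n \<le> v (Suc n)"
    and f_pos: "\<And>n. (\<Sum>j = 1..n. \<bar>f (int j)\<bar> / R ^ j) \<le> K * v n"
    and f_neg: "\<And>n. (\<Sum>j = 1..n. \<bar>f (- int j)\<bar> / R ^ j) \<le> K * v n"
  shows "\<exists>D. \<forall>i. \<bar>y i\<bar> \<le> D * v (nat \<bar>i\<bar>) * R ^ nat \<bar>i\<bar>"
proof -
  have rec_pos: "y (int (n + 2)) - x0 * y (int (n + 1)) + y (int n) = f (int (n + 1))" for n
    using rec[of "int n + 1"] by (simp add: add.commute)
  obtain D1 where D1: "\<And>n. \<bar>y (int n)\<bar> \<le> D1 * v n * R ^ n"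
    using second_order_recurrence_bound[of R x0 "\<lambda>n. y (int n)" "\<lambda>n. f (int n)" v K, OF R rec_pos v f_pos]
    by blast
  have rec_neg: "y (- int (n + 2)) - x0 * y (- int (n + 1)) + y (- int n) = f (- int (n + 1))" for n
  proof -
    have "- int (n + 2) = - int n - 1 - 1" "- int (n + 1) = - int n - 1" "- int n - 1 + 1 = - int n"
      by simp_all
    with rec[of "- int n - 1"] show ?thesis
      by (simp only:)
  qed
  obtain D2 where D2: "\<And>n. \<bar>y (- int n)\<bar> \<le> D2 * v n * R ^ n"
    using second_order_recurrence_bound[of R x0 "\<lambda>n. y (- int n)" "\<lambda>n. f (- int n)" v K, OF R rec_neg v f_neg]
    by blast
  have "\<bar>y i\<bar> \<le> max D1 D2 * v (nat \<bar>i\<bar>) * R ^ nat \<bar>i\<bar>" for i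
  proof -
    have "0 \<le> v (nat \<bar>i\<bar>) * R ^ nat \<bar>i\<bar>"
      using v(1)[of "nat \<bar>i\<bar>"] R by simp
    then have "D * v (nat \<bar>i\<bar>) * R ^ nat \<bar>i\<bar> \<le> max D1 D2 * v (nat \<bar>i\<bar>) * R ^ nat \<bar>i\<bar>"
      if "D = D1 \<or> D = D2" for D
      using that mult_right_mono[of D "max D1 D2"] by (auto simp: mult.assoc)
    moreover have "\<bar>y i\<bar> \<le> D1 * v (nat \<bar>i\<bar>) * R ^ nat \<bar>i\<bar> \<or> \<bar>y i\<bar> \<le> D2 * v (nat \<bar>i\<bar>) * R ^ nat \<bar>i\<bar>"
      using D1[of "nat i"] D2[of "nat (- i)"] by (cases "i \<ge> 0") auto
    ultimately show ?thesis by fastforce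
  qed
  then show ?thesis by blast
qed

definition poly_exp_weight :: "real \<Rightarrow> nat \<Rightarrow> int \<Rightarrow> real" where
  "poly_exp_weight R k i = (real (nat \<bar>i\<bar>) + 1) ^ k * R ^ nat \<bar>i\<bar>"

definition poly_exp_bounded :: "real \<Rightarrow> nat \<Rightarrow> (int \<Rightarrow> real) \<Rightarrow> bool" where
  "poly_exp_bounded R k y \<longleftrightarrow> (\<exists>D. \<forall>i. \<bar>y i\<bar> \<le> D * poly_exp_weight R k i)"

lemma poly_exp_weight_nonneg: "0 \<le> R \<Longrightarrow> 0 \<le> poly_exp_weight R k i"
  by (simp add: poly_exp_weight_def)

lemma poly_exp_weight_ge_1:
  assumes "1 \<le> R"
  shows "1 \<le> poly_exp_weight R k i"
proof -
  have "1 \<le> (real (nat \<bar>i\<bar>) + 1) ^ k" "1 \<le> R ^ nat \<bar>i\<bar>"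
    using assms by (auto intro: one_le_power)
  from mult_mono[OF this] show ?thesis
    by (simp add: poly_exp_weight_def)
qed

lemma poly_exp_weight_mono: "0 \<le> R \<Longrightarrow> k \<le> k' \<Longrightarrow> poly_exp_weight R k i \<le> poly_exp_weight R k' i"
  by (simp add: poly_exp_weight_def mult_right_mono power_increasing)

lemma poly_exp_weight_mult:
  "poly_exp_weight R1 k1 i * poly_exp_weight R2 k2 i = poly_exp_weight (R1 * R2) (k1 + k2) i"
  by (simp add: poly_exp_weight_def power_add power_mult_distrib mult_ac)

lemma poly_exp_weight_shift:
  assumes "1 \<le> R"
  shows "poly_exp_weight R k (i + 1) \<le> (2 ^ k * R) * poly_exp_weight R k i"
proof -
  define W where "W = real (nat \<bar>i\<bar>) + 1"
  have "(real (nat \<bar>i + 1\<bar>) + 1) ^ k \<le> (2 * W) ^ k"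
    by (intro power_mono) (auto simp: W_def)
  moreover have "R ^ nat \<bar>i + 1\<bar> \<le> R * R ^ nat \<bar>i\<bar>"
    using assms power_increasing[of "nat \<bar>i + 1\<bar>" "Suc (nat \<bar>i\<bar>)" R] by simp
  ultimately have "poly_exp_weight R k (i + 1) \<le> (2 * W) ^ k * (R * R ^ nat \<bar>i\<bar>)"
    unfolding poly_exp_weight_def using assms by (intro mult_mono) (auto simp: W_def)
  also have "\<dots> = (2 ^ k * R) * poly_exp_weight R k i"
    unfolding poly_exp_weight_def W_def[symmetric] by (simp add: power_mult_distrib mult_ac)
  finally show ?thesis .
qed

lemma poly_exp_bounded_nonneg_const:
  assumes "poly_exp_bounded R k y" "0 \<le> R"
  shows "\<exists>D\<ge>0. \<forall>i. \<bar>y i\<bar> \<le> D * poly_exp_weight R k i"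
proof -
  obtain D where D: "\<And>i. \<bar>y i\<bar> \<le> D * poly_exp_weight R k i"
    using assms(1) by (auto simp: poly_exp_bounded_def)
  have "D * poly_exp_weight R k i \<le> \<bar>D\<bar> * poly_exp_weight R k i" for i
    using assms(2) by (intro mult_right_mono poly_exp_weight_nonneg) auto
  with D show ?thesis
    using order_trans abs_ge_zero by blast
qed

lemma poly_exp_bounded_zero: "poly_exp_bounded R k (\<lambda>i. 0)"
  unfolding poly_exp_bounded_def by (auto intro: exI[of _ 0])

lemma poly_exp_boundedI_bounded:
  assumes "\<And>i. \<bar>y i\<bar> \<le> C" "1 \<le> R"
  shows "poly_exp_bounded R k y"
  unfolding poly_exp_bounded_def
proof (intro exI allI)
  fix i
  have "C * 1 \<le> C * poly_exp_weight R k i"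
    using assms order_trans[OF abs_ge_zero assms(1)] by (intro mult_left_mono poly_exp_weight_ge_1)
  then show "\<bar>y i\<bar> \<le> C * poly_exp_weight R k i"
    using assms(1)[of i] by simp
qed

lemma poly_exp_bounded_mono:
  assumes "poly_exp_bounded R k y" "k \<le> k'" "0 \<le> R"
  shows "poly_exp_bounded R k' y"
proof -
  obtain D where "0 \<le> D" and D: "\<And>i. \<bar>y i\<bar> \<le> D * poly_exp_weight R k i"
    using poly_exp_bounded_nonneg_const[OF assms(1,3)] by blast
  have "D * poly_exp_weight R k i \<le> D * poly_exp_weight R k' i" for i
    using \<open>0 \<le> D\<close> assms(2,3) by (intro mult_left_mono poly_exp_weight_mono)
  then show ?thesis
    unfolding poly_exp_bounded_def using D order_trans by blast
qed

lemma poly_exp_bounded_add: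
  assumes "poly_exp_bounded R k y" "poly_exp_bounded R k z"
  shows "poly_exp_bounded R k (\<lambda>i. y i + z i)"
proof -
  obtain D1 D2 where D1: "\<And>i. \<bar>y i\<bar> \<le> D1 * poly_exp_weight R k i"
    and D2: "\<And>i. \<bar>z i\<bar> \<le> D2 * poly_exp_weight R k i"
    using assms by (auto simp: poly_exp_bounded_def)
  have "\<bar>y i + z i\<bar> \<le> (D1 + D2) * poly_exp_weight R k i" for i
  proof -
    have "\<bar>y i\<bar> + \<bar>z i\<bar> \<le> D1 * poly_exp_weight R k i + D2 * poly_exp_weight R k i"
      using D1[of i] D2[of i] by (rule add_mono)
    then show ?thesis
      using abs_triangle_ineq[of "y i" "z i"] by (simp add: distrib_right)
  qed
  then show ?thesis
    unfolding poly_exp_bounded_def by blast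
qed

lemma poly_exp_bounded_cmult:
  assumes "poly_exp_bounded R k y"
  shows "poly_exp_bounded R k (\<lambda>i. c * y i)"
proof -
  obtain D where "\<And>i. \<bar>y i\<bar> \<le> D * poly_exp_weight R k i"
    using assms by (auto simp: poly_exp_bounded_def)
  then have "\<bar>c * y i\<bar> \<le> (\<bar>c\<bar> * D) * poly_exp_weight R k i" for i
    by (simp add: abs_mult mult.assoc mult_left_mono)
  then show ?thesis
    unfolding poly_exp_bounded_def by blast
qed

lemma poly_exp_bounded_diff:
  "poly_exp_bounded R k y \<Longrightarrow> poly_exp_bounded R k z \<Longrightarrow> poly_exp_bounded R k (\<lambda>i. y i - z i)"
  using poly_exp_bounded_add[of R k y "\<lambda>i. -1 * z i"] poly_exp_bounded_cmult[of R k z "-1"] by simp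

lemma poly_exp_bounded_sum:
  "finite A \<Longrightarrow> (\<And>a. a \<in> A \<Longrightarrow> poly_exp_bounded R k (y a))
    \<Longrightarrow> poly_exp_bounded R k (\<lambda>i. \<Sum>a\<in>A. y a i)"
proof (induction A rule: finite_induct)
  case empty
  then show ?case by (simp add: poly_exp_bounded_zero)
next
  case (insert a A)
  then show ?case by (simp add: poly_exp_bounded_add)
qed

lemma poly_exp_bounded_mult:
  assumes "poly_exp_bounded R1 k1 y" "poly_exp_bounded R2 k2 z" "0 \<le> R1" "0 \<le> R2"
  shows "poly_exp_bounded (R1 * R2) (k1 + k2) (\<lambda>i. y i * z i)"
proof -
  obtain D1 where "0 \<le> D1" "\<And>i. \<bar>y i\<bar> \<le> D1 * poly_exp_weight R1 k1 i"
    using poly_exp_bounded_nonneg_const[OF assms(1,3)] by blast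
  moreover obtain D2 where "0 \<le> D2" "\<And>i. \<bar>z i\<bar> \<le> D2 * poly_exp_weight R2 k2 i"
    using poly_exp_bounded_nonneg_const[OF assms(2,4)] by blast
  ultimately have "\<bar>y i * z i\<bar> \<le> (D1 * poly_exp_weight R1 k1 i) * (D2 * poly_exp_weight R2 k2 i)" for i
    unfolding abs_mult using assms(3,4) by (intro mult_mono mult_nonneg_nonneg poly_exp_weight_nonneg) auto
  then have "\<bar>y i * z i\<bar> \<le> (D1 * D2) * poly_exp_weight (R1 * R2) (k1 + k2) i" for i
    by (simp add: poly_exp_weight_mult[symmetric] mult_ac)
  then show ?thesis
    unfolding poly_exp_bounded_def by blast
qed

lemma poly_exp_bounded_shift:
  assumes "poly_exp_bounded R k y" "1 \<le> R"
  shows "poly_exp_bounded R k (\<lambda>i. y (i + 1))"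
proof -
  obtain D where "0 \<le> D" and D: "\<And>i. \<bar>y i\<bar> \<le> D * poly_exp_weight R k i"
    using poly_exp_bounded_nonneg_const[OF assms(1)] assms(2) by auto
  have "\<bar>y (i + 1)\<bar> \<le> (D * (2 ^ k * R)) * poly_exp_weight R k i" for i
  proof -
    have "\<bar>y (i + 1)\<bar> \<le> D * poly_exp_weight R k (i + 1)"
      by (rule D)
    also have "\<dots> \<le> D * ((2 ^ k * R) * poly_exp_weight R k i)"
      using \<open>0 \<le> D\<close> assms(2) by (intro mult_left_mono poly_exp_weight_shift)
    finally show ?thesis
      by (simp add: mult_ac)
  qed
  then show ?thesis
    unfolding poly_exp_bounded_def by blast
qed

lemma homogeneous_recurrence_poly_exp_bounded:
  assumes R: "R > 1" "R * R - x0 * R + 1 = 0" and rec: "\<And>i. y (i + 1) - x0 * y i + y (i - 1) = 0"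
  shows "poly_exp_bounded R 0 y"
proof -
  obtain D where "\<forall>i. \<bar>y i\<bar> \<le> D * 1 * R ^ nat \<bar>i\<bar>"
    using second_order_recurrence_bound_int[of R x0 y "\<lambda>_. 0" "\<lambda>_. 1" 0, OF R rec] by auto
  then show ?thesis
    unfolding poly_exp_bounded_def poly_exp_weight_def by auto
qed

lemma forced_recurrence_poly_exp_bounded:
  assumes R: "R > 1" "R * R - x0 * R + 1 = 0"
    and rec: "\<And>i. y (i + 1) - x0 * y i + y (i - 1) = f i"
    and f: "poly_exp_bounded R k f"
  shows "poly_exp_bounded R (Suc k) y"
proof -
  obtain C where "0 \<le> C" and C: "\<And>i. \<bar>f i\<bar> \<le> C * poly_exp_weight R k i"
    using poly_exp_bounded_nonneg_const[OF f] R by auto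
  have sum_bound: "(\<Sum>j = 1..n. \<bar>f (s j)\<bar> / R ^ j) \<le> C * (real n + 1) ^ Suc k"
    if s: "\<And>j. nat \<bar>s j\<bar> = j" for n and s :: "nat \<Rightarrow> int"
  proof -
    have "(\<Sum>j = 1..n. \<bar>f (s j)\<bar> / R ^ j) \<le> (\<Sum>j = 1..n. C * (real n + 1) ^ k)"
    proof (rule sum_mono)
      fix j assume "j \<in> {1..n}"
      then have "C * (real j + 1) ^ k * R ^ j \<le> C * (real n + 1) ^ k * R ^ j"
        using \<open>0 \<le> C\<close> R by (intro mult_right_mono mult_left_mono power_mono) auto
      with C[of "s j"] s[of j] R show "\<bar>f (s j)\<bar> / R ^ j \<le> C * (real n + 1) ^ k"
        by (simp add: divide_le_eq poly_exp_weight_def mult.assoc)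
    qed
    also have "\<dots> \<le> (real n + 1) * (C * (real n + 1) ^ k)"
      using \<open>0 \<le> C\<close> by (simp add: mult_right_mono)
    finally show ?thesis by (simp add: mult_ac)
  qed
  have v: "1 \<le> (real n + 1) ^ Suc k" "(real n + 1) ^ Suc k \<le> (real (Suc n) + 1) ^ Suc k" for n
    by (rule one_le_power, simp) (rule power_mono, simp_all)
  have f_pos: "(\<Sum>j = 1..n. \<bar>f (int j)\<bar> / R ^ j) \<le> C * (real n + 1) ^ Suc k"
    and f_neg: "(\<Sum>j = 1..n. \<bar>f (- int j)\<bar> / R ^ j) \<le> C * (real n + 1) ^ Suc k" for n
    using sum_bound[of "\<lambda>j. int j"] sum_bound[of "\<lambda>j. - int j"] by simp_all
  obtain D where "\<forall>i. \<bar>y i\<bar> \<le> D * (real (nat \<bar>i\<bar>) + 1) ^ Suc k * R ^ nat \<bar>i\<bar>"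
    using second_order_recurrence_bound_int[of R x0 y f "\<lambda>n. (real n + 1) ^ Suc k" C, OF R rec v f_pos f_neg]
    by blast
  then show ?thesis
    unfolding poly_exp_bounded_def poly_exp_weight_def by (auto simp: mult.assoc)
qed

section \<open>Graded growth of Grassmann-valued sequences\<close>

definition graded_growth :: "nat \<Rightarrow> real \<Rightarrow> (int \<Rightarrow> grass) \<Rightarrow> bool" where
  "graded_growth N R y \<longleftrightarrow> (\<forall>l \<subseteq> {1..N}. poly_exp_bounded R (card l div 2) (\<lambda>i. y i l))"

lemma graded_growth_const:
  assumes "1 \<le> R"
  shows "graded_growth N R (\<lambda>i. z)"
  unfolding graded_growth_def using assms by (auto intro: poly_exp_boundedI_bounded)

lemma graded_growth_shift:
  assumes "graded_growth N R y" "1 \<le> R"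
  shows "graded_growth N R (\<lambda>i. y (i + 1))"
  using assms poly_exp_bounded_shift by (auto simp: graded_growth_def)

lemma graded_growth_gadd:
  assumes "graded_growth N R y" "graded_growth N R z"
  shows "graded_growth N R (\<lambda>i. gadd (y i) (z i))"
  using assms poly_exp_bounded_add by (auto simp: graded_growth_def gadd_def)

lemma graded_growth_gmul:
  assumes y: "graded_growth N R1 y" and z: "graded_growth N R2 z" and R: "0 \<le> R1" "0 \<le> R2"
  shows "graded_growth N (R1 * R2) (\<lambda>i. gmul (y i) (z i))"
  unfolding graded_growth_def gmul_def
proof (intro allI impI)
  fix l assume l: "l \<subseteq> {1..N}"
  then have "finite l"
    using finite_subset by blast
  show "poly_exp_bounded (R1 * R2) (card l div 2) (\<lambda>i. \<Sum>m\<in>Pow l. gsign m (l - m) * y i m * z i (l - m))"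
  proof (rule poly_exp_bounded_sum)
    fix m assume m: "m \<in> Pow l"
    then have "card m div 2 + card (l - m) div 2 \<le> card l div 2"
      using card_split_subset[OF \<open>finite l\<close>, of m] by auto
    moreover have "m \<subseteq> {1..N}" "l - m \<subseteq> {1..N}"
      using l m by auto
    then have "poly_exp_bounded (R1 * R2) (card m div 2 + card (l - m) div 2) (\<lambda>i. y i m * z i (l - m))"
      using y z R unfolding graded_growth_def by (intro poly_exp_bounded_mult) auto
    ultimately have "poly_exp_bounded (R1 * R2) (card l div 2) (\<lambda>i. y i m * z i (l - m))"
      using R by (metis poly_exp_bounded_mono zero_le_mult_iff)
    then show "poly_exp_bounded (R1 * R2) (card l div 2) (\<lambda>i. gsign m (l - m) * y i m * z i (l - m))"
      by (simp add: mult.assoc poly_exp_bounded_cmult)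
  qed (use \<open>finite l\<close> in simp)
qed

lemma gmul_split_body:
  assumes "finite l"
  shows "gmul x y l = body x * y l + (\<Sum>m\<in>Pow l - {{}}. gsign m (l - m) * x m * y (l - m))"
  unfolding gmul_def using assms by (subst sum.remove[of _ "{}"]) (auto simp: body_def)

lemma coefficient_recurrence:
  assumes "gadd (b (i + 1)) (b (i - 1)) = gsub (gmul x (b i)) t" "finite l"
  shows "b (i + 1) l - body x * b i l + b (i - 1) l
    = (\<Sum>m\<in>Pow l - {{}}. gsign m (l - m) * x m * b i (l - m)) - t l"
  using fun_cong[OF assms(1), of l] gmul_split_body[OF assms(2), of x "b i"]
  by (simp add: gadd_def gsub_def)

lemma lower_degree_term_bounded:
  assumes b_even: "\<And>i. geven N (b i)" and l: "finite l" "even (card l)" "card l div 2 = Suc k"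
    and m: "m \<subseteq> l" "m \<noteq> {}" and "0 \<le> R"
    and b_bounded: "poly_exp_bounded R (card (l - m) div 2) (\<lambda>i. b i (l - m))"
  shows "poly_exp_bounded R k (\<lambda>i. c * b i (l - m))"
proof (cases "even (card m)")
  case True
  have "card m \<noteq> 0"
    using m l finite_subset[of m l] by auto
  with True l card_split_subset[OF l(1) m(1)] have "card (l - m) div 2 \<le> k"
    by presburger
  with b_bounded \<open>0 \<le> R\<close> show ?thesis
    by (intro poly_exp_bounded_cmult) (rule poly_exp_bounded_mono)
next
  case False
  then have "odd (card (l - m))"
    using m l card_split_subset[of l m] by auto
  then have "b i (l - m) = 0" for i
    using b_even[of i] by (auto simp: geven_def)
  then show ?thesis
    using poly_exp_bounded_zero by simp
qed

lemma coefficient_forcing_bounded: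
  assumes b_even: "\<And>i. geven N (b i)" and l: "finite l" "even (card l)" "card l div 2 = Suc k"
    and "1 \<le> R" and t_bounded: "\<And>i. \<bar>t i\<bar> \<le> T"
    and lower: "\<And>m. m \<subseteq> l \<Longrightarrow> m \<noteq> {} \<Longrightarrow> poly_exp_bounded R (card (l - m) div 2) (\<lambda>i. b i (l - m))"
  shows "poly_exp_bounded R k (\<lambda>i. (\<Sum>m\<in>Pow l - {{}}. gsign m (l - m) * x m * b i (l - m)) - t i)"
proof (intro poly_exp_bounded_diff poly_exp_bounded_sum)
  fix m assume "m \<in> Pow l - {{}}"
  with \<open>1 \<le> R\<close> lower show "poly_exp_bounded R k (\<lambda>i. gsign m (l - m) * x m * b i (l - m))"
    by (intro lower_degree_term_bounded[where b = b, OF b_even l]) auto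
qed (use l t_bounded \<open>1 \<le> R\<close> in \<open>auto intro: poly_exp_boundedI_bounded\<close>)

lemma graded_growth_of_recurrence:
  fixes b t :: "int \<Rightarrow> grass"
  assumes b_even: "\<And>i. geven N (b i)"
    and rec: "\<And>i. gadd (b (i + 1)) (b (i - 1)) = gsub (gmul x (b i)) (t i)"
    and t_bounded: "\<And>i l. \<bar>t i l\<bar> \<le> T l" and t_nil: "\<And>i. body (t i) = 0"
    and R: "R > 1" "R * R - body x * R + 1 = 0"
  shows "graded_growth N R b"
proof -
  have "poly_exp_bounded R (card l div 2) (\<lambda>i. b i l)" if "finite l" for l
    using that
  proof (induction "card l" arbitrary: l rule: less_induct)
    case less
    define f where "f i = (\<Sum>m\<in>Pow l - {{}}. gsign m (l - m) * x m * b i (l - m)) - t i l" for i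
    have rec_l: "b (i + 1) l - body x * b i l + b (i - 1) l = f i" for i
      unfolding f_def using rec less.prems by (rule coefficient_recurrence)
    consider "odd (card l)" | "l = {}" | "even (card l)" "l \<noteq> {}" by blast
    then show ?case
    proof cases
      case 1
      then have "b i l = 0" for i
        using b_even[of i] by (auto simp: geven_def)
      then show ?thesis using poly_exp_bounded_zero by simp
    next
      case 2
      then have "f i = 0" for i
        using t_nil[of i] by (simp add: f_def body_def)
      with 2 show ?thesis
        using homogeneous_recurrence_poly_exp_bounded[OF R] rec_l by simp
    next
      case 3
      then have "card l \<noteq> 0"
        using less.prems by simp
      with 3(1) have card_l: "card l div 2 = Suc (card l div 2 - 1)"
        by presburger
      have "card (l - m) < card l" if "m \<subseteq> l" "m \<noteq> {}" for m
        using that less.prems by (auto intro: psubset_card_mono)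
      then have "poly_exp_bounded R (card l div 2 - 1) f"
        unfolding f_def using less R t_bounded
        by (intro coefficient_forcing_bounded[where b = b, OF b_even less.prems 3(1) card_l]) auto
      then show ?thesis
        by (subst card_l) (rule forced_recurrence_poly_exp_bounded[OF R rec_l])
    qed
  qed
  then show ?thesis
    unfolding graded_growth_def by (meson finite_atLeastAtMost finite_subset)
qed

lemma poly_exp_bounded_bigo:
  assumes "poly_exp_bounded R k y" "0 \<le> R" "k \<le> k'"
  shows "y \<in> O[cofinite](\<lambda>i. real_of_int \<bar>i\<bar> ^ k' * R ^ nat \<bar>i\<bar>)"
proof -
  obtain D where "0 \<le> D" and D: "\<And>i. \<bar>y i\<bar> \<le> D * poly_exp_weight R k i"
    using poly_exp_bounded_nonneg_const[OF assms(1,2)] by blast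
  have "\<bar>y i\<bar> \<le> (D * 2 ^ k) * \<bar>real_of_int \<bar>i\<bar> ^ k' * R ^ nat \<bar>i\<bar>\<bar>" if "i \<noteq> 0" for i
  proof -
    have "(real (nat \<bar>i\<bar>) + 1) ^ k \<le> (2 * real_of_int \<bar>i\<bar>) ^ k"
      using that by (intro power_mono) auto
    also have "\<dots> \<le> 2 ^ k * real_of_int \<bar>i\<bar> ^ k'"
      using that assms(3) by (simp add: power_mult_distrib power_increasing)
    finally have "poly_exp_weight R k i \<le> 2 ^ k * real_of_int \<bar>i\<bar> ^ k' * R ^ nat \<bar>i\<bar>"
      unfolding poly_exp_weight_def using assms(2) by (intro mult_right_mono) auto
    then have "D * poly_exp_weight R k i \<le> D * (2 ^ k * real_of_int \<bar>i\<bar> ^ k' * R ^ nat \<bar>i\<bar>)"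
      using \<open>0 \<le> D\<close> by (rule mult_left_mono)
    with D[of i] assms(2) show ?thesis
      by (simp add: abs_mult mult_ac)
  qed
  then have "\<forall>\<^sub>F i in cofinite. norm (y i) \<le> (D * 2 ^ k) * norm (real_of_int \<bar>i\<bar> ^ k' * R ^ nat \<bar>i\<bar>)"
    unfolding eventually_cofinite by (auto intro: finite_subset[of _ "{0}"])
  then show ?thesis
    by (rule bigoI)
qed

lemma gnorm_s2k_bigo:
  assumes "graded_growth N R y" "0 \<le> R" "k \<le> k'"
  shows "(\<lambda>i. gnorm N (s2k k (y i))) \<in> O[cofinite](\<lambda>i. real_of_int \<bar>i\<bar> ^ k' * R ^ nat \<bar>i\<bar>)"
proof (rule poly_exp_bounded_bigo[OF _ assms(2,3)])
  show "poly_exp_bounded R k (\<lambda>i. gnorm N (s2k k (y i)))"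
    unfolding gnorm_def
  proof (intro poly_exp_bounded_sum)
    fix l assume l: "l \<in> Pow {1..N}"
    show "poly_exp_bounded R k (\<lambda>i. \<bar>s2k k (y i) l\<bar>)"
    proof (cases "card l = 2 * k")
      case True
      then have "poly_exp_bounded R k (\<lambda>i. y i l)"
        using assms(1) l by (auto simp: graded_growth_def)
      moreover have "finite l"
        using l finite_subset by auto
      ultimately show ?thesis
        using True by (simp add: s2k_def poly_exp_bounded_def)
    next
      case False
      then show ?thesis
        using poly_exp_bounded_zero by (simp add: s2k_def)
    qed
  qed simp
qed

section \<open>Lambda-lengths of the arcs disjoint from a fixed arc\<close>

lemma body_gsqrt: "body (gsqrt N z) = sqrt (body z)"
proof -
  have "body (gscale (1 / body z) (soul z)) = 0"
    by (simp add: gscale_def soul_def gsub_def gconst_def body_def)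
  then have "(\<Sum>j\<le>N. ((1/2::real) gchoose j) * gpow (gscale (1 / body z) (soul z)) j {}) = 1"
    by (simp add: gpow_empty zero_power if_distrib sum.delta)
  then show ?thesis
    by (simp add: gsqrt_def body_def)
qed

lemma gt_2_of_flip_relation:
  fixes \<alpha> \<beta> p q x :: real
  assumes "0 < \<alpha>" "0 < \<beta>" "0 < p" "0 < q" "p + q = x * \<beta>" "p * q = \<alpha> * \<alpha> + \<beta> * \<beta>"
  shows "2 < x"
proof -
  have "4 * (\<beta> * \<beta>) < 4 * (p * q)"
    using assms by simp
  also have "\<dots> \<le> (p + q) * (p + q)"
    using zero_le_square[of "p - q"] by (simp add: algebra_simps)
  finally have "2 * 2 * (\<beta> * \<beta>) < (x * x) * (\<beta> * \<beta>)"
    using assms(5) by (simp add: mult_ac)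
  then have "2 * 2 < x * x"
    using assms(2) by simp
  moreover have "0 < x * \<beta>"
    using assms(3-5) by simp
  then have "0 < x"
    using assms(2) by (simp add: zero_less_mult_iff)
  ultimately show ?thesis
    using mult_mono[of x 2 x 2] by force
qed

lemma larger_characteristic_root:
  fixes x :: real
  assumes "2 < x"
  defines "R \<equiv> (x + sqrt (x * x - 4)) / 2"
  shows "1 < R" and "R * R - x * R + 1 = 0"
proof -
  define S where "S = sqrt (x * x - 4)"
  have "4 < x * x"
    using assms mult_strict_mono[of 2 x 2 x] by simp
  then have "0 \<le> S" "S * S = x * x - 4"
    by (simp_all add: S_def)
  with assms(1) show "1 < R" and "R * R - x * R + 1 = 0"
    unfolding R_def S_def[symmetric] by (simp_all add: field_simps)
qed

lemma semiperimeter_cleared: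
  fixes a b0 b1 h Wa U V I1 I2 I3 I4 I5 I6 :: "'a::comm_ring_1"
  assumes h: "h = a * I1 + b0 * I2 + b1 * I3 + (Wa * I4 + U * I5 + V * I6)"
    and "b0 * b1 * I1 = 1" "a * b1 * I2 = 1" "a * b0 * I3 = 1" "a * I4 = 1" "b0 * I5 = 1" "b1 * I6 = 1"
  shows "h * (a * b0 * b1) = a * a + b0 * b0 + b1 * b1 + Wa * (b0 * b1) + U * (a * b1) + V * (a * b0)"
proof -
  have "h * (a * b0 * b1) = a * a * (b0 * b1 * I1) + b0 * b0 * (a * b1 * I2) + b1 * b1 * (a * b0 * I3)
      + Wa * (b0 * b1) * (a * I4) + U * (a * b1) * (b0 * I5) + V * (a * b0) * (b1 * I6)"
    by (simp add: h algebra_simps)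
  with assms(2-) show ?thesis by simp
qed

lemma unit_mult_cancel_left:
  fixes u :: "'a::comm_ring_1"
  assumes "u * v = 1" "u * x = u * y"
  shows "x = y"
  by (metis assms mult.assoc mult.commute mult_1_right)

lemma lambda_length_recurrence:
  fixes a h Wa :: "'a::comm_ring_1" and b U V binv :: "int \<Rightarrow> 'a"
  assumes flip_next: "\<And>i. b (i + 1) * b (i - 1) = a * a + b i * b i + a * b i * V i"
    and flip_prev: "\<And>i. b i * b (i + 2) = a * a + b (i + 1) * b (i + 1) + a * b (i + 1) * U i"
    and semiper: "\<And>i. h * (a * b i * b (i + 1)) = a * a + b i * b i + b (i + 1) * b (i + 1)
                         + Wa * (b i * b (i + 1)) + U i * (a * b (i + 1)) + V i * (a * b i)"
    and b_unit: "\<And>i. b i * binv i = 1"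
  shows "b (i + 1) + b (i - 1) = (a * h - Wa) * b i - a * U i" and "a * U (i + 2) = a * U i"
proof -
  have next_eq: "b (j + 1) + b (j - 1) + Wa * b j + a * U j = a * h * b j" for j
  proof (rule unit_mult_cancel_left[OF b_unit[of "j + 1"]])
    have "b (j + 1) * (b (j + 1) + b (j - 1) + Wa * b j + a * U j)
        = b (j + 1) * b (j - 1) + b (j + 1) * b (j + 1) + Wa * (b j * b (j + 1)) + U j * (a * b (j + 1))"
      by (simp add: algebra_simps)
    also have "\<dots> = h * (a * b j * b (j + 1))"
      unfolding flip_next semiper by (simp add: algebra_simps)
    finally show "b (j + 1) * (b (j + 1) + b (j - 1) + Wa * b j + a * U j) = b (j + 1) * (a * h * b j)"
      by (simp add: mult_ac)
  qed
  have prev_eq: "b (j + 2) + b j + Wa * b (j + 1) + a * V j = a * h * b (j + 1)" for j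
  proof (rule unit_mult_cancel_left[OF b_unit[of j]])
    have "b j * (b (j + 2) + b j + Wa * b (j + 1) + a * V j)
        = b j * b (j + 2) + b j * b j + Wa * (b j * b (j + 1)) + V j * (a * b j)"
      by (simp add: algebra_simps)
    also have "\<dots> = h * (a * b j * b (j + 1))"
      unfolding flip_prev semiper by (simp add: algebra_simps)
    finally show "b j * (b (j + 2) + b j + Wa * b (j + 1) + a * V j) = b j * (a * h * b (j + 1))"
      by (simp add: mult_ac)
  qed
  show "b (i + 1) + b (i - 1) = (a * h - Wa) * b i - a * U i"
    using next_eq[of i] by (simp add: algebra_simps eq_diff_eq)
  have "a * U (j + 1) = a * V j" for j
    using next_eq[of "j + 1"] prev_eq[of j] by (simp add: add.assoc) (metis add_left_cancel)
  moreover have "a * V (j + 1) = a * U j" for j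
  proof (rule unit_mult_cancel_left[OF b_unit[of "j + 1"]])
    have "b (j + 2) * b j = a * a + b (j + 1) * b (j + 1) + a * b (j + 1) * V (j + 1)"
      using flip_next[of "j + 1"] by (simp add: add.assoc)
    with flip_prev[of j] show "b (j + 1) * (a * V (j + 1)) = b (j + 1) * (a * U j)"
      by (simp add: mult_ac)
  qed
  ultimately show "a * U (i + 2) = a * U i"
    by (metis add.assoc one_add_one)
qed

lemma periodic_2_int:
  fixes g :: "int \<Rightarrow> 'a"
  assumes "\<And>i. g (i + 2) = g i"
  shows "g i = g (i mod 2)"
proof -
  have shift: "g (j + 2 * int n) = g j" for j n
  proof (induction n)
    case (Suc n)
    have "g (j + 2 * int (Suc n)) = g ((j + 2 * int n) + 2)"
      by (simp add: algebra_simps)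
    with Suc assms show ?case by simp
  qed simp
  show ?thesis
  proof (cases "0 \<le> i div 2")
    case True
    then have "i = i mod 2 + 2 * int (nat (i div 2))"
      by simp
    then show ?thesis
      using shift[of "i mod 2" "nat (i div 2)"] by simp
  next
    case False
    then have "i + 2 * int (nat (- (i div 2))) = i mod 2"
      by (simp add: minus_div_mult_eq_mod[symmetric])
    then show ?thesis
      using shift[of i "nat (- (i div 2))"] by simp
  qed
qed

locale torus_lambda_lengths =
  fixes N :: nat
    and a h :: grass
    and b c :: "int \<Rightarrow> grass"
    and mu :: "int \<Rightarrow> bool \<Rightarrow> grass"
    and oa ob ob' :: "int \<Rightarrow> bool"
  assumes a_even: "geven N a" and a_pos: "body a > 0"
    and b_even: "\<And>i. geven N (b i)" and b_pos: "\<And>i. body (b i) > 0"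
    and c_even: "\<And>i. geven N (c i)"
    and mu_odd: "\<And>i t. godd N (mu i t)"
    and flip_next: "\<And>i. gmul (b (i + 1)) (b (i - 1)) = flip_rhs a (b i) (Wof (mu i) (ob' i))"
    and flip_prev: "\<And>i. gmul (b i) (b (i + 2)) = flip_rhs a (b (i + 1)) (Wof (mu i) (ob i))"
    and flip_a: "\<And>i. gmul a (c i) = flip_rhs (b i) (b (i + 1)) (Wof (mu i) (oa i))"
    and Wa_const: "\<And>i. Wof (mu i) (oa i) = Wof (mu 0) (oa 0)"
    and h_def: "\<And>i. h = semiper N a (b i) (b (i + 1))
                          (Wof (mu i) (oa i)) (Wof (mu i) (ob i)) (Wof (mu i) (ob' i))"
begin

definition Wa :: grass where
  "Wa = Wof (mu 0) (oa 0)"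

definition trace :: grass where
  "trace = gsub (gmul a h) Wa"

definition growth_rate :: real where
  "growth_rate = body (gscale (1/2) (gadd trace (gsqrt N (gsub (gmul trace trace) (gconst 4)))))"

lemma W_even: "geven N (Wof (mu i) t)"
  unfolding Wof_def using mu_odd godd_gmul by simp

lemma body_W: "body (Wof (mu i) t) = 0"
proof -
  have "body (mu i t') = 0" for t'
    using mu_odd[of i t'] by (auto simp: godd_def body_def)
  then show ?thesis
    by (simp add: Wof_def body_gmul)
qed

lemma body_nonzero:
  "body a \<noteq> 0" "body (b i) \<noteq> 0" "body (gmul a (b i)) \<noteq> 0" "body (gmul (b i) (b j)) \<noteq> 0"
  using a_pos b_pos[of i] b_pos[of j] by (simp_all add: body_gmul)

lemma grass_even_data [simp]:
  "a \<in> grass_even" "b i \<in> grass_even" "c i \<in> grass_even" "Wof (mu i) t \<in> grass_even"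
  using a_even b_even c_even W_even by (meson grass_evenI)+

lemma grass_even_inverses [simp]:
  "ginv N a \<in> grass_even" "ginv N (b i) \<in> grass_even"
  "ginv N (gmul a (b i)) \<in> grass_even" "ginv N (gmul (b i) (b j)) \<in> grass_even"
  using ginv_right_inverse(1)[OF a_even] ginv_right_inverse(1)[OF b_even]
    ginv_right_inverse(1)[OF geven_gmul[OF a_even b_even]]
    ginv_right_inverse(1)[OF geven_gmul[OF b_even b_even]] body_nonzero
  by auto

lemma grass_even_h [simp]: "h \<in> grass_even"
  using h_def[of 0] by (simp add: semiper_def gdiv_def)

lemma semiperimeter_evgrass:
  "Abs_evgrass h * (Abs_evgrass a * Abs_evgrass (b i) * Abs_evgrass (b (i + 1)))
    = Abs_evgrass a * Abs_evgrass a + Abs_evgrass (b i) * Abs_evgrass (b i)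
      + Abs_evgrass (b (i + 1)) * Abs_evgrass (b (i + 1))
      + Abs_evgrass Wa * (Abs_evgrass (b i) * Abs_evgrass (b (i + 1)))
      + Abs_evgrass (Wof (mu i) (ob i)) * (Abs_evgrass a * Abs_evgrass (b (i + 1)))
      + Abs_evgrass (Wof (mu i) (ob' i)) * (Abs_evgrass a * Abs_evgrass (b i))"
proof (rule semiperimeter_cleared)
  show "Abs_evgrass h
    = Abs_evgrass a * Abs_evgrass (ginv N (gmul (b i) (b (i + 1))))
      + Abs_evgrass (b i) * Abs_evgrass (ginv N (gmul a (b (i + 1))))
      + Abs_evgrass (b (i + 1)) * Abs_evgrass (ginv N (gmul a (b i)))
      + (Abs_evgrass Wa * Abs_evgrass (ginv N a)
        + Abs_evgrass (Wof (mu i) (ob i)) * Abs_evgrass (ginv N (b i))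
        + Abs_evgrass (Wof (mu i) (ob' i)) * Abs_evgrass (ginv N (b (i + 1))))"
    using h_def[of i] Wa_const[of i]
    by (simp add: semiper_def gdiv_def Wa_def Abs_evgrass_gadd Abs_evgrass_gmul)
  note unit = Abs_evgrass_ginv[of N]
  show "Abs_evgrass (b i) * Abs_evgrass (b (i + 1)) * Abs_evgrass (ginv N (gmul (b i) (b (i + 1)))) = 1"
    "Abs_evgrass a * Abs_evgrass (b (i + 1)) * Abs_evgrass (ginv N (gmul a (b (i + 1)))) = 1"
    "Abs_evgrass a * Abs_evgrass (b i) * Abs_evgrass (ginv N (gmul a (b i))) = 1"
    "Abs_evgrass a * Abs_evgrass (ginv N a) = 1"
    "Abs_evgrass (b i) * Abs_evgrass (ginv N (b i)) = 1"
    "Abs_evgrass (b (i + 1)) * Abs_evgrass (ginv N (b (i + 1))) = 1"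
    using unit[OF geven_gmul[OF b_even b_even] body_nonzero(4)]
      unit[OF geven_gmul[OF a_even b_even] body_nonzero(3)]
      unit[OF a_even body_nonzero(1)] unit[OF b_even body_nonzero(2)]
    by (simp_all add: Abs_evgrass_gmul)
qed

lemma b_recurrence:
  shows "gadd (b (i + 1)) (b (i - 1)) = gsub (gmul trace (b i)) (gmul a (Wof (mu i) (ob i)))"
    and "gmul a (Wof (mu (i + 2)) (ob (i + 2))) = gmul a (Wof (mu i) (ob i))"
proof -
  let ?E = Abs_evgrass
  have flips: "?E (b (i + 1)) * ?E (b (i - 1))
        = ?E a * ?E a + ?E (b i) * ?E (b i) + ?E a * ?E (b i) * ?E (Wof (mu i) (ob' i))"
      "?E (b i) * ?E (b (i + 2))
        = ?E a * ?E a + ?E (b (i + 1)) * ?E (b (i + 1)) + ?E a * ?E (b (i + 1)) * ?E (Wof (mu i) (ob i))"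
    for i
    using arg_cong[OF flip_next[of i], of ?E] arg_cong[OF flip_prev[of i], of ?E]
    by (simp_all add: flip_rhs_def Abs_evgrass_gadd Abs_evgrass_gmul)
  note recurrence = lambda_length_recurrence[where b = "\<lambda>i. ?E (b i)" and a = "?E a" and h = "?E h"
      and Wa = "?E Wa" and U = "\<lambda>i. ?E (Wof (mu i) (ob i))" and V = "\<lambda>i. ?E (Wof (mu i) (ob' i))"
      and binv = "\<lambda>i. ?E (ginv N (b i))",
      OF flips semiperimeter_evgrass Abs_evgrass_ginv[OF b_even body_nonzero(2)]]
  have [simp]: "Wa \<in> grass_even"
    by (simp add: Wa_def)
  show "gadd (b (i + 1)) (b (i - 1)) = gsub (gmul trace (b i)) (gmul a (Wof (mu i) (ob i)))"
    using recurrence(1)[of i]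
    by (simp add: Abs_evgrass_inject[symmetric] trace_def Abs_evgrass_gadd Abs_evgrass_gsub Abs_evgrass_gmul)
  show "gmul a (Wof (mu (i + 2)) (ob (i + 2))) = gmul a (Wof (mu i) (ob i))"
    using recurrence(2)[of i] by (simp add: Abs_evgrass_inject[symmetric] Abs_evgrass_gmul)
qed

lemma trace_body_gt_2: "2 < body trace"
proof (rule gt_2_of_flip_relation)
  show "body (b 1) + body (b (- 1)) = body trace * body (b 0)"
    using arg_cong[OF b_recurrence(1)[of 0], of body] body_W
    by (simp add: body_def gadd_def gsub_def body_gmul[unfolded body_def])
  show "body (b 1) * body (b (- 1)) = body a * body a + body (b 0) * body (b 0)"
    using arg_cong[OF flip_next[of 0], of body] body_W
    by (simp add: flip_rhs_def body_def gadd_def body_gmul[unfolded body_def])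
qed (use a_pos b_pos in auto)

lemma growth_rate_eq: "growth_rate = (body trace + sqrt (body trace * body trace - 4)) / 2"
  by (simp add: growth_rate_def body_gsqrt[unfolded body_def] body_def gscale_def gadd_def gsub_def
      gconst_def gmul_def)

lemma growth_rate: "1 < growth_rate" "growth_rate * growth_rate - body trace * growth_rate + 1 = 0"
  unfolding growth_rate_eq by (fact larger_characteristic_root[OF trace_body_gt_2])+

lemma graded_growth_b: "graded_growth N growth_rate b"
proof (rule graded_growth_of_recurrence)
  let ?t = "\<lambda>i. gmul a (Wof (mu i) (ob i))"
  show "gadd (b (i + 1)) (b (i - 1)) = gsub (gmul trace (b i)) (?t i)" for i
    by (rule b_recurrence)
  have "?t i = ?t (i mod 2)" for i
    by (rule periodic_2_int) (rule b_recurrence)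
  moreover have "i mod 2 = 0 \<or> i mod 2 = 1" for i :: int
    by presburger
  ultimately show "\<bar>?t i l\<bar> \<le> \<bar>?t 0 l\<bar> + \<bar>?t 1 l\<bar>" for i l
    by (metis abs_ge_zero add_increasing add_increasing2 order_refl)
  show "body (?t i) = 0" for i
    by (simp add: body_gmul body_W)
qed (use b_even growth_rate in auto)

lemma c_eq: "c i = gmul (ginv N a) (flip_rhs (b i) (b (i + 1)) Wa)"
proof -
  have "c i = gmul (gconst 1) (c i)"
    using grass_even_support[of "c i"] by (simp add: gmul_gconst_left gscale_def)
  also have "\<dots> = gmul (ginv N a) (gmul a (c i))"
    using a_even a_pos by (simp add: ginv_left_inverse gmul_assoc[symmetric])
  finally show ?thesis
    using Wa_const[of i] by (simp add: flip_a Wa_def)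
qed

lemma graded_growth_c: "graded_growth N (growth_rate * growth_rate) c"
proof -
  let ?R = growth_rate
  have R: "0 \<le> ?R" "1 \<le> ?R"
    using growth_rate by auto
  have b: "graded_growth N ?R b" and b': "graded_growth N ?R (\<lambda>i. b (i + 1))"
    using graded_growth_b graded_growth_shift R by auto
  have "graded_growth N (?R * ?R) (\<lambda>i. gmul (b i) (b i))"
    and "graded_growth N (?R * ?R) (\<lambda>i. gmul (b (i + 1)) (b (i + 1)))"
    and bb': "graded_growth N (?R * ?R) (\<lambda>i. gmul (b i) (b (i + 1)))"
    using b b' R by (auto intro: graded_growth_gmul)
  moreover have "graded_growth N (?R * ?R * 1) (\<lambda>i. gmul (gmul (b i) (b (i + 1))) Wa)"
    using R by (intro graded_growth_gmul[OF bb'] graded_growth_const) auto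
  ultimately have "graded_growth N (?R * ?R) (\<lambda>i. flip_rhs (b i) (b (i + 1)) Wa)"
    unfolding flip_rhs_def by (auto intro: graded_growth_gadd)
  then have "graded_growth N (1 * (?R * ?R)) (\<lambda>i. gmul (ginv N a) (flip_rhs (b i) (b (i + 1)) Wa))"
    using R by (intro graded_growth_gmul graded_growth_const) auto
  moreover have "c = (\<lambda>i. gmul (ginv N a) (flip_rhs (b i) (b (i + 1)) Wa))"
    using c_eq by blast
  ultimately show ?thesis
    by simp
qed

theorem lambda_length_growth:
  shows "(\<lambda>i. gnorm N (s2k k (b i))) \<in> O[cofinite](\<lambda>i. real_of_int \<bar>i\<bar> ^ k * growth_rate ^ nat \<bar>i\<bar>)"
    and "(\<lambda>i. gnorm N (s2k k (c i)))
           \<in> O[cofinite](\<lambda>i. real_of_int \<bar>i\<bar> ^ (2 * k) * growth_rate ^ (2 * nat \<bar>i\<bar>))"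
proof -
  have "0 \<le> growth_rate"
    using growth_rate by simp
  then show "(\<lambda>i. gnorm N (s2k k (b i))) \<in> O[cofinite](\<lambda>i. real_of_int \<bar>i\<bar> ^ k * growth_rate ^ nat \<bar>i\<bar>)"
    by (rule gnorm_s2k_bigo[OF graded_growth_b _ order_refl])
  have "(\<lambda>i. gnorm N (s2k k (c i)))
      \<in> O[cofinite](\<lambda>i. real_of_int \<bar>i\<bar> ^ (2 * k) * (growth_rate * growth_rate) ^ nat \<bar>i\<bar>)"
    using graded_growth_c \<open>0 \<le> growth_rate\<close> by (intro gnorm_s2k_bigo) auto
  then show "(\<lambda>i. gnorm N (s2k k (c i)))
      \<in> O[cofinite](\<lambda>i. real_of_int \<bar>i\<bar> ^ (2 * k) * growth_rate ^ (2 * nat \<bar>i\<bar>))"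
    by (simp add: power_mult power2_eq_square)
qed

end

theorem lemma5p4:
  fixes N :: nat
    and a h :: grass
    and b c :: "int \<Rightarrow> grass"
    and mu :: "int \<Rightarrow> bool \<Rightarrow> grass"
    and oa ob ob' :: "int \<Rightarrow> bool"
  assumes a_even: "geven N a" and a_pos: "body a > 0"
    and b_even: "\<And>i. geven N (b i)" and b_pos: "\<And>i. body (b i) > 0"
    and c_even: "\<And>i. geven N (c i)" and c_pos: "\<And>i. body (c i) > 0"
    and mu_odd: "\<And>i t. godd N (mu i t)"
    and flip_next: "\<And>i. gmul (b (i + 1)) (b (i - 1)) = flip_rhs a (b i) (Wof (mu i) (ob' i))"
    and flip_prev: "\<And>i. gmul (b i) (b (i + 2)) = flip_rhs a (b (i + 1)) (Wof (mu i) (ob i))"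
    and flip_a: "\<And>i. gmul a (c i) = flip_rhs (b i) (b (i + 1)) (Wof (mu i) (oa i))"
    and Wa_const: "\<And>i. Wof (mu i) (oa i) = Wof (mu 0) (oa 0)"
    and h_def: "\<And>i. h = semiper N a (b i) (b (i + 1))
                          (Wof (mu i) (oa i)) (Wof (mu i) (ob i)) (Wof (mu i) (ob' i))"
  shows "let Wa = Wof (mu 0) (oa 0);
             x = gsub (gmul a h) Wa;
             r = gscale (1/2) (gadd x (gsqrt N (gsub (gmul x x) (gconst 4))));
             R = body r
         in \<forall>k::nat.
              (\<lambda>i. gnorm N (s2k k (b i))) \<in> O[cofinite](\<lambda>i. real_of_int \<bar>i\<bar> ^ k * R ^ nat \<bar>i\<bar>)
            \<and> (\<lambda>i. gnorm N (s2k k (c i))) \<in> O[cofinite](\<lambda>i. real_of_int \<bar>i\<bar> ^ (2 * k) * R ^ (2 * nat \<bar>i\<bar>))"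
proof -
  interpret torus_lambda_lengths N a h b c mu oa ob ob'
    using a_even a_pos b_even b_pos c_even mu_odd flip_next flip_prev flip_a Wa_const h_def
    by unfold_locales
  show ?thesis
    using lambda_length_growth unfolding Let_def growth_rate_def trace_def Wa_def by blast
qed

end
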